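(* Let $n>0$. Then $a(m)>a(n)$ for all $m>n$ if and only if the Fibonacci representation $(n)_F$ belongs to the regular language $10(100^*10)^*0^*$.
   Context: Let $(F_n)_{n\ge 0}$ be the Fibonacci numbers: $F_0=0$, $F_1=1$, $F_n=F_{n-1}+F_{n-2}$ for $n\ge 2$. Define $(a(n))_{n\ge 0}$ (OEIS A105774) by $a(0)=0$, $a(1)=1$, and for $n\ge 2$, $a(n)=F_{j+1}-a(n-F_j)$, where $j\ge 2$ is the unique index with $F_j<n\le F_{j+1}$. The Fibonacci (Zeckendorf) representation $(n)_F$ of $n\ge1$ is the unique binary string $e_1e_2\cdots e_t$ with $e_1=1$, no two consecutive $1$'s, and $n=\sum_{i=1}^t e_iF_{t-i+2}$. In the regular expression, juxtaposition is concatenation, $w^*$ denotes zero or more repetitions of $w$, and the star applies to the immediately preceding symbol or parenthesized group (so $100^*10$ denotes the strings $10\,0^k\,10$, $k\ge0$). *)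

theory Defs
  imports Main "HOL-Number_Theory.Fib"
begin

lemma fib_ge_idx: "n \<le> fib (Suc (Suc n))"
proof (induction n rule: nat_less_induct)
  case (1 n)
  show ?case
  proof (cases n)
    case 0 then show ?thesis by simp
  next
    case (Suc m)
    then have "m \<le> fib (Suc (Suc m))" using 1 by simp
    moreover have "fib (Suc (Suc (Suc m))) = fib (Suc (Suc m)) + fib (Suc m)" by simp
    moreover have "fib (Suc m) \<ge> 1" using fib_neq_0_nat[of "Suc m"] by simp
    ultimately show ?thesis using Suc by simp
  qed
qed

lemma fib_index_ex1:
  assumes "2 \<le> n"
  shows "\<exists>!j. 2 \<le> j \<and> fib j < n \<and> n \<le> fib (Suc j)"
proof -
  define j0 where "j0 = (LEAST j. n \<le> fib (Suc j))"
  have ex: "n \<le> fib (Suc (Suc (Suc n)))" using fib_ge_idx[of "Suc n"] by simp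
  have j0: "n \<le> fib (Suc j0)" unfolding j0_def by (rule LeastI[where P="\<lambda>j. n \<le> fib (Suc j)", OF ex])
  have min: "\<And>k. k < j0 \<Longrightarrow> fib (Suc k) < n"
    unfolding j0_def using not_less_Least by (metis not_le)
  have "j0 \<noteq> 0" using j0 assms by (cases j0) auto
  moreover have "j0 \<noteq> 1" using j0 assms by auto
  ultimately have j2: "2 \<le> j0" by simp
  have lt: "fib j0 < n" using min[of "j0 - 1"] j2 by (cases j0) auto
  show ?thesis
  proof (rule ex1I[of _ j0])
    show "2 \<le> j0 \<and> fib j0 < n \<and> n \<le> fib (Suc j0)" using j2 lt j0 by simp
  next
    fix j assume h: "2 \<le> j \<and> fib j < n \<and> n \<le> fib (Suc j)"
    show "j = j0"
    proof (rule ccontr)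
      assume "j \<noteq> j0"
      then have "j < j0 \<or> j0 < j" by arith
      then show False
      proof
        assume "j < j0" then have "fib (Suc j) \<le> fib j0" by (simp add: fib_mono)
        with h lt show False by simp
      next
        assume "j0 < j" then have "fib (Suc j0) \<le> fib j" by (simp add: fib_mono)
        with h j0 show False by simp
      qed
    qed
  qed
qed

text \<open>The unique index j \<ge> 2 with F_j < n \<le> F_{j+1} (meaningful for n \<ge> 2).\<close>
definition fib_index :: "nat \<Rightarrow> nat" where
  "fib_index n = (THE j. 2 \<le> j \<and> fib j < n \<and> n \<le> fib (Suc j))"

lemma fib_index_props:
  assumes "2 \<le> n"
  shows "2 \<le> fib_index n \<and> fib (fib_index n) < n \<and> n \<le> fib (Suc (fib_index n))"
  unfolding fib_index_def by (rule theI'[OF fib_index_ex1[OF assms]])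

function A105774 :: "nat \<Rightarrow> int" where
  "A105774 n = (if n \<le> 1 then int n
     else int (fib (Suc (fib_index n))) - A105774 (n - fib (fib_index n)))"
  by auto
termination
proof (relation "measure id")
  fix n :: nat assume "\<not> n \<le> 1"
  then have "2 \<le> n" by simp
  from fib_index_props[OF this] have "0 < fib (fib_index n)"
    using fib_neq_0_nat by simp
  then show "(n - fib (fib_index n), n) \<in> measure id" using \<open>2 \<le> n\<close> by simp
qed simp

declare A105774.simps [simp del]

text \<open>Binary strings are lists of digits in {0,1}, most significant digit first.
  Value of e_1 ... e_t is sum of e_i F_{t-i+2}; with 0-based position i the weight is F_{t-i+1}.\<close>
definition fib_value :: "nat list \<Rightarrow> nat" where
  "fib_value w = (\<Sum>i<length w. w ! i * fib (length w - i + 1))"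

definition is_fib_rep :: "nat list \<Rightarrow> bool" where
  "is_fib_rep w \<longleftrightarrow> w \<noteq> [] \<and> set w \<subseteq> {0, 1} \<and> hd w = 1 \<and>
     (\<forall>i. Suc i < length w \<longrightarrow> \<not> (w ! i = 1 \<and> w ! Suc i = 1))"

definition fib_rep :: "nat \<Rightarrow> nat list" where
  "fib_rep n = (THE w. is_fib_rep w \<and> fib_value w = n)"

definition lang :: "nat list set" where
  "lang = {[1,0] @ concat (map (\<lambda>k. [1,0] @ replicate k 0 @ [1,0]) ks) @ replicate m 0
           | ks m. True}"

end

theory Submission
  imports Defs
begin

text \<open>On the block (F_j, F_{j+1}] the recursion reads a(F_j + x) = F_{j+1} - a(x), and a maps
  this block into [F_j, F_{j+1}). So all later values exceed a(n) iff this holds within the block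
  of n, i.e. iff x = n - F_j is a strict maximum of a on [x, F_{j-1}]. That fails when
  x <= F_{j-2}, because a(F_{j-2} + 1) = F_{j-1} - 1; otherwise a second reflection at F_{j-2}
  turns it back into the original property for l = x - F_{j-2}, unless l = F_{j-3}. Hence the
  n with this property arise from the F_j (digits 10 0^m) by repeatedly prepending the digits 1010 0^k, which
  produces exactly the language 10(100^*10)^*0^*.\<close>

lemma one_le_fib: "0 < n \<Longrightarrow> 1 \<le> fib n"
  using fib_neq_0_nat[of n] by simp

lemma fib_less_imp_less: "fib m < fib n \<Longrightarrow> m < n"
  using fib_mono[of n m] by (meson not_le)

lemma fib_Suc_pred: "0 < j \<Longrightarrow> fib (Suc j) = fib j + fib (j - 1)"
  by (cases j; cases "j - 1") auto

lemma fib_plus_numerals: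
  "fib (i + 3) = fib (i + 2) + fib (i + 1)" "fib (i + 4) = fib (i + 3) + fib (i + 2)"
  "fib (i + 5) = fib (i + 4) + fib (i + 3)"
  by (simp_all add: numeral_eq_Suc)

lemma fib_block_exists: "2 \<le> n \<Longrightarrow> \<exists>j. 2 \<le> j \<and> fib j < n \<and> n \<le> fib (Suc j)"
  using fib_index_props by blast

lemma fib_index_eqI:
  assumes "2 \<le> j" "fib j < n" "n \<le> fib (Suc j)"
  shows "fib_index n = j"
proof -
  have "2 \<le> n" using one_le_fib[of j] assms by simp
  then show ?thesis unfolding fib_index_def
    by (rule the1_equality[OF fib_index_ex1]) (use assms in simp)
qed

lemma A105774_block:
  assumes "2 \<le> j" "fib j < n" "n \<le> fib (Suc j)"
  shows "A105774 n = int (fib (Suc j)) - A105774 (n - fib j)"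
proof -
  have "2 \<le> n" using one_le_fib[of j] assms by simp
  then show ?thesis using fib_index_eqI[OF assms] by (subst A105774.simps) simp
qed

lemma A105774_block_shift:
  assumes "2 \<le> j" "0 < x" "x \<le> fib (j - 1)"
  shows "A105774 (fib j + x) = int (fib (Suc j)) - A105774 x"
  using A105774_block[of j "fib j + x"] fib_Suc_pred[of j] assms by simp

lemma A105774_1 [simp]: "A105774 (Suc 0) = 1"
  by (subst A105774.simps) simp

lemma A105774_2: "A105774 2 = 1"
  using A105774_block[of 2 2] by (simp add: numeral_eq_Suc)

lemma A105774_block_bounds:
  "2 \<le> j \<Longrightarrow> fib j < n \<Longrightarrow> n \<le> fib (Suc j) \<Longrightarrow>
    int (fib j) \<le> A105774 n \<and> A105774 n < int (fib (Suc j))"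
proof (induction n arbitrary: j rule: less_induct)
  case (less n)
  define k where "k = n - fib j"
  have k: "0 < k" "k \<le> fib (j - 1)" "k < n"
    using less.prems fib_Suc_pred[of j] one_le_fib[of j] unfolding k_def by auto
  have "1 \<le> A105774 k \<and> A105774 k \<le> int (fib (j - 1))"
  proof (cases "k = 1")
    case True
    then show ?thesis using one_le_fib[of "j - 1"] less.prems by simp
  next
    case False
    then obtain q where q: "2 \<le> q" "fib q < k" "k \<le> fib (Suc q)"
      using fib_block_exists[of k] k by auto
    have "fib (Suc q) \<le> fib (j - 1)"
      using fib_less_imp_less[of q "j - 1"] q k by (intro fib_mono) simp
    then show ?thesis using less.IH[OF k(3) q] one_le_fib[of q] q by simp
  qed
  moreover have "A105774 n = int (fib (Suc j)) - A105774 k"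
    unfolding k_def using A105774_block less.prems by blast
  ultimately show ?case using fib_Suc_pred[of j] less.prems by simp
qed

lemma A105774_less_fib: "2 \<le> n \<Longrightarrow> n \<le> fib p \<Longrightarrow> A105774 n < int (fib p)"
proof -
  assume n: "2 \<le> n" "n \<le> fib p"
  then obtain j where j: "2 \<le> j" "fib j < n" "n \<le> fib (Suc j)" using fib_block_exists by blast
  have "fib (Suc j) \<le> fib p" using fib_less_imp_less[of j p] j n by (intro fib_mono) simp
  then show ?thesis using A105774_block_bounds[OF j] by simp
qed

lemma fib_le_A105774: "2 \<le> p \<Longrightarrow> fib p < n \<Longrightarrow> int (fib p) \<le> A105774 n"
proof -
  assume p: "2 \<le> p" "fib p < n"
  then have "2 \<le> n" using one_le_fib[of p] by simp
  then obtain j where j: "2 \<le> j" "fib j < n" "n \<le> fib (Suc j)" using fib_block_exists by blast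
  have "fib p \<le> fib j" using fib_less_imp_less[of p "Suc j"] j p by (intro fib_mono) simp
  then show ?thesis using A105774_block_bounds[OF j] by simp
qed

definition later_larger :: "nat \<Rightarrow> bool" where
  "later_larger n \<longleftrightarrow> (\<forall>m>n. A105774 n < A105774 m)"

lemma not_later_larger_1: "\<not> later_larger 1"
proof
  assume "later_larger 1"
  then have "A105774 1 < A105774 2" unfolding later_larger_def by simp
  then show False using A105774_2 by simp
qed

lemma later_larger_iff_in_block:
  assumes j: "2 \<le> j" "fib j < n" "n \<le> fib (Suc j)"
  shows "later_larger n \<longleftrightarrow> (\<forall>m. n < m \<and> m \<le> fib (Suc j) \<longrightarrow> A105774 n < A105774 m)"
proof -
  have "A105774 n < A105774 m" if "fib (Suc j) < m" for m
    using A105774_block_bounds[OF j] fib_le_A105774[of "Suc j" m] j that by simp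
  then show ?thesis unfolding later_larger_def using j(3) by (meson not_le order.strict_trans1)
qed

lemma reflection_min_iff:
  fixes f :: "nat \<Rightarrow> 'a :: ordered_ab_group_add"
  assumes reflect: "\<And>x. 0 < x \<Longrightarrow> x \<le> L \<Longrightarrow> f (F + x) = C - f x" and k: "0 < k" "k \<le> L"
  shows "(\<forall>m. F + k < m \<and> m \<le> F + L \<longrightarrow> f (F + k) < f m)
     \<longleftrightarrow> (\<forall>x. k < x \<and> x \<le> L \<longrightarrow> f x < f k)"
proof -
  have "(\<forall>m. F + k < m \<and> m \<le> F + L \<longrightarrow> f (F + k) < f m)
     \<longleftrightarrow> (\<forall>x. k < x \<and> x \<le> L \<longrightarrow> f (F + k) < f (F + x))"
  proof safe
    fix m assume h: "\<forall>x. k < x \<and> x \<le> L \<longrightarrow> f (F + k) < f (F + x)" "F + k < m" "m \<le> F + L"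
    then have "f (F + k) < f (F + (m - F))" using h(2,3) by (intro h(1)[rule_format]) auto
    then show "f (F + k) < f m" using h(2) by simp
  qed simp
  also have "\<dots> \<longleftrightarrow> (\<forall>x. k < x \<and> x \<le> L \<longrightarrow> f x < f k)"
    using reflect k by (intro all_cong) simp
  finally show ?thesis .
qed

lemma later_larger_iff_reflected:
  assumes j: "2 \<le> j" "fib j < n" "n \<le> fib (Suc j)"
  shows "later_larger n \<longleftrightarrow>
    (\<forall>x. n - fib j < x \<and> x \<le> fib (j - 1) \<longrightarrow> A105774 x < A105774 (n - fib j))"
proof -
  define k where "k = n - fib j"
  have n: "n = fib j + k" and k: "0 < k" "k \<le> fib (j - 1)"
    using j fib_Suc_pred[of j] unfolding k_def by auto
  have "later_larger n \<longleftrightarrow>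
      (\<forall>m. fib j + k < m \<and> m \<le> fib j + fib (j - 1) \<longrightarrow> A105774 (fib j + k) < A105774 m)"
    using later_larger_iff_in_block[OF j] fib_Suc_pred[of j] j n by simp
  also have "\<dots> \<longleftrightarrow> (\<forall>x. k < x \<and> x \<le> fib (j - 1) \<longrightarrow> A105774 x < A105774 k)"
    using A105774_block_shift[OF j(1)] k by (rule reflection_min_iff)
  finally show ?thesis unfolding k_def .
qed

lemma larger_up_to_fib_iff:
  assumes l: "0 < l" "l \<le> fib p"
  shows "(\<forall>x. l < x \<and> x \<le> fib p \<longrightarrow> A105774 l < A105774 x) \<longleftrightarrow> l = fib p \<or> later_larger l"
proof (intro iffI)
  assume larger: "\<forall>x. l < x \<and> x \<le> fib p \<longrightarrow> A105774 l < A105774 x"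
  show "l = fib p \<or> later_larger l"
  proof (cases "l = fib p")
    case False
    then have "l < fib p" using l by simp
    moreover have "l \<noteq> 1"
    proof
      assume "l = 1"
      then have "A105774 1 < A105774 2" using larger \<open>l < fib p\<close> by simp
      then show False using A105774_2 by simp
    qed
    then obtain q where q: "2 \<le> q" "fib q < l" "l \<le> fib (Suc q)"
      using fib_block_exists l by (metis One_nat_def Suc_1 Suc_leI le_neq_implies_less)
    ultimately have "fib (Suc q) \<le> fib p"
      using fib_less_imp_less[of q p] by (intro fib_mono) simp
    then show ?thesis using later_larger_iff_in_block[OF q] larger by auto
  qed simp
qed (auto simp: later_larger_def)

lemma later_larger_iff_shift:
  assumes n: "fib (i + 4) < n" "n \<le> fib (i + 5)"
  shows "later_larger n \<longleftrightarrow> fib (i + 4) + fib (i + 2) < n \<and>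
    (n = fib (i + 5) \<or> later_larger (n - fib (i + 4) - fib (i + 2)))"
proof -
  define k where "k = n - fib (i + 4)"
  have k: "0 < k" "k \<le> fib (i + 3)" using n fib_plus_numerals unfolding k_def by auto
  have "later_larger n \<longleftrightarrow> (\<forall>x. k < x \<and> x \<le> fib (i + 3) \<longrightarrow> A105774 x < A105774 k)"
    using later_larger_iff_reflected[of "i + 4" n] n unfolding k_def by (simp add: numeral_eq_Suc)
  also have "\<dots> \<longleftrightarrow> fib (i + 2) < k \<and> (n = fib (i + 5) \<or> later_larger (k - fib (i + 2)))"
  proof (cases "fib (i + 2) < k")
    case False
    have shift: "A105774 (fib (i + 2) + x) = int (fib (i + 3)) - A105774 x"
      if "0 < x" "x \<le> fib (i + 1)" for x
      using A105774_block_shift[of "i + 2" x] that by (simp add: numeral_eq_Suc)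
    have "A105774 k \<le> int (fib (i + 3)) - 1"
    proof (cases "k = 1")
      case True
      then show ?thesis using one_le_fib[of "i + 1"] fib_plus_numerals(1)[of i] by simp
    next
      case False
      then have "A105774 k < int (fib (i + 2))"
        using A105774_less_fib[of k "i + 2"] k \<open>\<not> fib (i + 2) < k\<close> by simp
      then show ?thesis using one_le_fib[of "i + 1"] fib_plus_numerals(1)[of i] by simp
    qed
    also have "\<dots> = A105774 (fib (i + 2) + 1)" using shift[of 1] one_le_fib[of "i + 1"] by simp
    finally have "A105774 k \<le> A105774 (fib (i + 2) + 1)" .
    moreover have "k < fib (i + 2) + 1" "fib (i + 2) + 1 \<le> fib (i + 3)"
      using False one_le_fib[of "i + 1"] fib_plus_numerals(1)[of i] by auto
    ultimately show ?thesis using False by fastforce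
  next
    case True
    define l where "l = k - fib (i + 2)"
    have k_eq: "k = fib (i + 2) + l" and l: "0 < l" "l \<le> fib (i + 1)"
      using True k fib_plus_numerals(1)[of i] unfolding l_def by auto
    have reflect: "- A105774 (fib (i + 2) + x) = - int (fib (i + 3)) - (- A105774 x)"
      if "0 < x" "x \<le> fib (i + 1)" for x
      using A105774_block_shift[of "i + 2" x] that by (simp add: numeral_eq_Suc)
    have "(\<forall>x. k < x \<and> x \<le> fib (i + 3) \<longrightarrow> A105774 x < A105774 k)
      \<longleftrightarrow> (\<forall>x. fib (i + 2) + l < x \<and> x \<le> fib (i + 2) + fib (i + 1) \<longrightarrow>
             - A105774 (fib (i + 2) + l) < - A105774 x)"
      using k_eq fib_plus_numerals(1)[of i] by simp
    also have "\<dots> \<longleftrightarrow> (\<forall>x. l < x \<and> x \<le> fib (i + 1) \<longrightarrow> A105774 l < A105774 x)"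
      using reflection_min_iff[of "fib (i + 1)" "\<lambda>x. - A105774 x", OF reflect l] by simp
    also have "\<dots> \<longleftrightarrow> l = fib (i + 1) \<or> later_larger l"
      using larger_up_to_fib_iff[OF l] .
    also have "l = fib (i + 1) \<longleftrightarrow> n = fib (i + 5)"
      using True n fib_plus_numerals[of i] unfolding l_def k_def by auto
    finally show ?thesis using True unfolding l_def by simp
  qed
  finally show ?thesis unfolding k_def by auto
qed

text \<open>Rule step prepends the digits 1010 0^k to the representation of l.\<close>
inductive lang_number :: "nat \<Rightarrow> bool" where
  fib: "3 \<le> j \<Longrightarrow> lang_number (fib j)"
| step: "lang_number l \<Longrightarrow> l < fib (i + 1) \<Longrightarrow> lang_number (fib (i + 4) + fib (i + 2) + l)"

lemma lang_number_pos: "lang_number n \<Longrightarrow> 0 < n"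
  by (induction rule: lang_number.induct) (auto intro: fib_neq_0_nat)

lemma later_larger_2: "later_larger 2" and later_larger_3: "later_larger 3"
  using later_larger_iff_reflected[of 2 2] later_larger_iff_reflected[of 3 3]
  by (simp_all add: numeral_eq_Suc)

lemma later_larger_fib: "3 \<le> j \<Longrightarrow> later_larger (fib j)"
proof -
  assume "3 \<le> j"
  then consider "j = 3" | "j = 4" | "5 \<le> j" by linarith
  then show ?thesis
  proof cases
    case 3
    define i where "i = j - 5"
    have j: "j = i + 5" using 3 unfolding i_def by simp
    have "fib (i + 4) < fib (i + 5)" "fib (i + 4) + fib (i + 2) < fib (i + 5)"
      using one_le_fib[of "i + 1"] one_le_fib[of "i + 2"] fib_plus_numerals[of i] by auto
    then show ?thesis using later_larger_iff_shift[of i "fib (i + 5)"] j by simp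
  qed (use later_larger_2 later_larger_3 in \<open>simp_all add: numeral_eq_Suc\<close>)
qed

lemma later_larger_if_lang_number: "lang_number n \<Longrightarrow> later_larger n"
proof (induction rule: lang_number.induct)
  case (step l i)
  have "fib (i + 4) < fib (i + 4) + fib (i + 2) + l" "fib (i + 4) + fib (i + 2) + l \<le> fib (i + 5)"
    using lang_number_pos[OF step.hyps(1)] step.hyps(2) fib_plus_numerals[of i] by auto
  then show ?case using later_larger_iff_shift[of i] step.IH lang_number_pos[OF step.hyps(1)] by simp
qed (rule later_larger_fib)

lemma lang_number_if_later_larger: "0 < n \<Longrightarrow> later_larger n \<Longrightarrow> lang_number n"
proof (induction n rule: less_induct)
  case (less n)
  have "2 \<le> n" using less.prems not_later_larger_1 by (cases "n = 1") auto
  then obtain j where j: "2 \<le> j" "fib j < n" "n \<le> fib (Suc j)" using fib_block_exists by blast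
  show ?case
  proof (cases "j \<le> 3")
    case True
    then have "n = fib 3 \<or> n = fib 4" using j by (auto simp: le_Suc_eq numeral_eq_Suc)
    then show ?thesis using lang_number.fib[of 3] lang_number.fib[of 4] by auto
  next
    case False
    define i where "i = j - 4"
    have "j = i + 4" using False unfolding i_def by simp
    then have n: "fib (i + 4) < n" "n \<le> fib (i + 5)" using j by (auto simp: numeral_eq_Suc)
    define l where "l = n - fib (i + 4) - fib (i + 2)"
    show ?thesis
    proof (cases "n = fib (i + 5)")
      case False
      then have shift: "fib (i + 4) + fib (i + 2) < n" "later_larger l"
        using later_larger_iff_shift[OF n] less.prems unfolding l_def by auto
      then have "0 < l" "l < fib (i + 1)" "l < n" using n False fib_plus_numerals[of i] unfolding l_def by auto
      then have "lang_number (fib (i + 4) + fib (i + 2) + l)"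
        using less.IH shift(2) by (intro lang_number.step) auto
      then show ?thesis using shift(1) unfolding l_def by simp
    qed (simp add: lang_number.fib)
  qed
qed

lemma fib_value_Nil [simp]: "fib_value [] = 0"
  by (simp add: fib_value_def)

lemma fib_value_Cons [simp]: "fib_value (d # w) = d * fib (length w + 2) + fib_value w"
  unfolding fib_value_def length_Cons sum.lessThan_Suc_shift
  by (simp add: Suc_diff_le del: sum.lessThan_Suc)

lemma fib_value_replicate_0 [simp]: "fib_value (replicate k 0) = 0"
  by (induction k) auto

lemma fib_value_replicate_0_append [simp]: "fib_value (replicate k 0 @ w) = fib_value w"
  by (induction k) auto

fun zeckendorf_digits :: "nat list \<Rightarrow> bool" where
  "zeckendorf_digits [] = True"
| "zeckendorf_digits [d] = (d \<le> 1)"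
| "zeckendorf_digits (d # e # w) = (d \<le> 1 \<and> \<not> (d = 1 \<and> e = 1) \<and> zeckendorf_digits (e # w))"

lemma zeckendorf_digits_ConsD:
  "zeckendorf_digits (d # w) \<Longrightarrow> d \<le> 1 \<and> zeckendorf_digits w"
  by (cases w) auto

lemma zeckendorf_digits_0_Cons [simp]: "zeckendorf_digits (0 # w) = zeckendorf_digits w"
  by (cases w) auto

lemma zeckendorf_digits_replicate_0 [simp]: "zeckendorf_digits (replicate k 0)"
  by (induction k) auto

lemma zeckendorf_digits_replicate_0_append [simp]:
  "zeckendorf_digits (replicate k 0 @ w) = zeckendorf_digits w"
  by (induction k) auto

lemma no_adjacent_ones_Cons_Cons:
  "(\<forall>i. Suc i < length (d # e # w) \<longrightarrow> \<not> ((d # e # w) ! i = 1 \<and> (d # e # w) ! Suc i = (1::nat)))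
     \<longleftrightarrow> \<not> (d = 1 \<and> e = 1) \<and>
         (\<forall>i. Suc i < length (e # w) \<longrightarrow> \<not> ((e # w) ! i = 1 \<and> (e # w) ! Suc i = 1))"
  (is "(\<forall>i. ?P i) \<longleftrightarrow> ?Q")
proof
  assume "\<forall>i. ?P i"
  then show ?Q by (metis Suc_less_eq length_Cons nth_Cons_0 nth_Cons_Suc zero_less_Suc)
next
  assume ?Q
  show "\<forall>i. ?P i"
  proof
    fix i show "?P i" using \<open>?Q\<close> by (cases i) auto
  qed
qed

lemma zeckendorf_digits_iff:
  "zeckendorf_digits w \<longleftrightarrow>
    set w \<subseteq> {0, 1} \<and> (\<forall>i. Suc i < length w \<longrightarrow> \<not> (w ! i = 1 \<and> w ! Suc i = 1))"
proof (induction w rule: zeckendorf_digits.induct)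
  case (3 d e w)
  show ?case unfolding zeckendorf_digits.simps(3) no_adjacent_ones_Cons_Cons 3 by auto
qed auto

lemma is_fib_rep_iff: "is_fib_rep w \<longleftrightarrow> w \<noteq> [] \<and> hd w = 1 \<and> zeckendorf_digits w"
  unfolding is_fib_rep_def zeckendorf_digits_iff by blast

lemma fib_value_less_fib: "zeckendorf_digits w \<Longrightarrow> fib_value w < fib (length w + 2)"
proof (induction w rule: induct_list012)
  case (2 d)
  then show ?case by (auto simp: numeral_eq_Suc)
next
  case (3 d e w)
  show ?case
  proof (cases "d = 0")
    case True
    then show ?thesis using 3 fib_mono[of "length w + 3" "length w + 4"]
      by (simp add: numeral_eq_Suc)
  next
    case False
    then have "d = 1" "e = 0" using "3.prems" zeckendorf_digits_ConsD[of e w] by auto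
    then show ?thesis using 3 by (simp add: numeral_eq_Suc)
  qed
qed simp

lemma fib_value_ge_fib: "hd w = 1 \<Longrightarrow> w \<noteq> [] \<Longrightarrow> fib (length w + 1) \<le> fib_value w"
  by (cases w) auto

lemma zeckendorf_digits_unique_same_length:
  "zeckendorf_digits u \<Longrightarrow> zeckendorf_digits v \<Longrightarrow> length u = length v \<Longrightarrow>
    fib_value u = fib_value v \<Longrightarrow> u = v"
proof (induction u arbitrary: v)
  case (Cons d u)
  obtain e v' where v: "v = e # v'" using Cons.prems by (cases v) auto
  have u: "zeckendorf_digits u" "d \<le> 1" and v': "zeckendorf_digits v'" "e \<le> 1"
    using Cons.prems v zeckendorf_digits_ConsD by blast+
  have len: "length u = length v'" using Cons.prems v by simp
  have bounds: "fib_value u < fib (length u + 2)" "fib_value v' < fib (length u + 2)"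
    using fib_value_less_fib[OF u(1)] fib_value_less_fib[OF v'(1)] len by auto
  have "d = e"
  proof (rule ccontr)
    assume "d \<noteq> e"
    then have "d = 1 \<and> e = 0 \<or> d = 0 \<and> e = 1" using u(2) v'(2) by linarith
    then show False using Cons.prems(4) v len bounds by auto
  qed
  then show ?case using Cons.IH[OF u(1) v'(1) len] Cons.prems(4) v len by simp
qed simp

lemma fib_rep_unique:
  assumes "is_fib_rep u" "is_fib_rep v" "fib_value u = fib_value v"
  shows "u = v"
proof -
  have "fib (length u + 1) \<le> fib_value u" "fib_value u < fib (length u + 2)"
    "fib (length v + 1) \<le> fib_value v" "fib_value v < fib (length v + 2)"
    using assms(1,2) fib_value_ge_fib fib_value_less_fib unfolding is_fib_rep_iff by blast+
  then have "fib (length u + 1) < fib (length v + 2)" "fib (length v + 1) < fib (length u + 2)"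
    using assms(3) by linarith+
  then have "length u + 1 < length v + 2" "length v + 1 < length u + 2"
    using fib_less_imp_less by blast+
  then have "length u = length v" by simp
  then show ?thesis
    using assms zeckendorf_digits_unique_same_length unfolding is_fib_rep_iff by blast
qed

lemma zeckendorf_digits_exist:
  "n < fib (t + 2) \<Longrightarrow> \<exists>w. length w = t \<and> zeckendorf_digits w \<and> fib_value w = n"
proof (induction t arbitrary: n rule: induct_nat_012)
  case 1
  then show ?case by (intro exI[of _ "[n]"]) (simp add: numeral_eq_Suc)
next
  case (ge2 t)
  show ?case
  proof (cases "n < fib (t + 3)")
    case True
    then obtain w where "length w = Suc t" "zeckendorf_digits w" "fib_value w = n"
      using ge2.IH(2) by (auto simp: numeral_eq_Suc)
    then show ?thesis by (intro exI[of _ "0 # w"]) simp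
  next
    case False
    then have "n - fib (t + 3) < fib (t + 2)"
      using ge2.prems by (simp add: numeral_eq_Suc)
    then obtain w where "length w = t" "zeckendorf_digits w" "fib_value w = n - fib (t + 3)"
      using ge2.IH(1) by blast
    then show ?thesis using False
      by (intro exI[of _ "1 # 0 # w"]) (simp add: numeral_eq_Suc)
  qed
qed simp

lemma fib_value_dropWhile_0 [simp]: "fib_value (dropWhile ((=) 0) w) = fib_value w"
  by (induction w) auto

lemma zeckendorf_digits_dropWhile_0:
  "zeckendorf_digits w \<Longrightarrow> zeckendorf_digits (dropWhile ((=) 0) w)"
  by (induction w) (auto dest: zeckendorf_digits_ConsD)

lemma fib_rep_exists: "0 < n \<Longrightarrow> \<exists>w. is_fib_rep w \<and> fib_value w = n"
proof -
  assume "0 < n"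
  have "n < fib (Suc n + 2)" using fib_ge_idx[of "Suc n"] by (simp only: add_2_eq_Suc')
  then obtain w where w: "zeckendorf_digits w" "fib_value w = n"
    using zeckendorf_digits_exist by blast
  define v where "v = dropWhile ((=) 0) w"
  have v: "zeckendorf_digits v" "fib_value v = n"
    using w zeckendorf_digits_dropWhile_0 unfolding v_def by auto
  then have "v \<noteq> []" using \<open>0 < n\<close> by auto
  moreover have "hd v \<noteq> 0" using hd_dropWhile[of "(=) 0" w] \<open>v \<noteq> []\<close> unfolding v_def by simp
  moreover have "hd v \<le> 1" using v(1) \<open>v \<noteq> []\<close> zeckendorf_digits_ConsD[of "hd v" "tl v"] by simp
  ultimately show ?thesis using v by (intro exI[of _ v]) (simp add: is_fib_rep_iff)
qed

lemma fib_rep_eqI: "is_fib_rep w \<Longrightarrow> fib_value w = n \<Longrightarrow> fib_rep n = w"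
  unfolding fib_rep_def using fib_rep_unique by (intro the_equality) auto

definition lang_word :: "nat list \<Rightarrow> nat \<Rightarrow> nat list" where
  "lang_word ks m = [1,0] @ concat (map (\<lambda>k. [1,0] @ replicate k 0 @ [1,0]) ks) @ replicate m 0"

lemma lang_eq: "lang = {lang_word ks m | ks m. True}"
  unfolding lang_def lang_word_def ..

lemma lang_word_Nil: "lang_word [] m = 1 # 0 # replicate m 0"
  by (simp add: lang_word_def)

lemma lang_word_Cons: "lang_word (k # ks) m = 1 # 0 # 1 # 0 # replicate k 0 @ lang_word ks m"
  by (simp add: lang_word_def)

lemma is_fib_rep_lang_word: "is_fib_rep (lang_word ks m)"
proof -
  have "zeckendorf_digits (lang_word ks m)"
    by (induction ks) (simp_all add: lang_word_Nil lang_word_Cons)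
  then show ?thesis by (cases ks) (simp_all add: is_fib_rep_iff lang_word_Nil lang_word_Cons)
qed

lemma fib_value_lang_word_Nil: "fib_value (lang_word [] m) = fib (m + 3)"
  by (simp add: lang_word_Nil numeral_eq_Suc)

lemma fib_value_lang_word_Cons:
  "fib_value (lang_word (k # ks) m) = fib (i + 4) + fib (i + 2) + fib_value (lang_word ks m)"
  if "i = k + length (lang_word ks m) + 1"
  using that by (simp add: lang_word_Cons add.commute add.left_commute numeral_eq_Suc)

lemma lang_number_iff_lang_word: "lang_number n \<longleftrightarrow> (\<exists>ks m. fib_value (lang_word ks m) = n)"
proof
  assume "lang_number n"
  then show "\<exists>ks m. fib_value (lang_word ks m) = n"
  proof (induction rule: lang_number.induct)
    case (fib j)
    then have "fib_value (lang_word [] (j - 3)) = fib j" by (simp add: fib_value_lang_word_Nil)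
    then show ?case by blast
  next
    case (step l i)
    then obtain ks m where ks: "fib_value (lang_word ks m) = l" by blast
    define s where "s = length (lang_word ks m)"
    have "fib (s + 1) < fib (i + 1)"
      using fib_value_ge_fib[of "lang_word ks m"] is_fib_rep_lang_word[of ks m] ks step.hyps(2)
      unfolding s_def is_fib_rep_iff by simp
    then have "s < i" using fib_less_imp_less by fastforce
    then have "fib_value (lang_word ((i - s - 1) # ks) m) = fib (i + 4) + fib (i + 2) + l"
      using fib_value_lang_word_Cons[of i "i - s - 1" ks m] ks unfolding s_def by simp
    then show ?case by blast
  qed
next
  assume "\<exists>ks m. fib_value (lang_word ks m) = n"
  then obtain ks m where "fib_value (lang_word ks m) = n" by blast
  moreover have "lang_number (fib_value (lang_word ks m))"
  proof (induction ks)
    case Nil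
    show ?case unfolding fib_value_lang_word_Nil by (rule lang_number.fib) simp
  next
    case (Cons k ks)
    define i where "i = k + length (lang_word ks m) + 1"
    have "fib_value (lang_word ks m) < fib (length (lang_word ks m) + 2)"
      using fib_value_less_fib is_fib_rep_lang_word unfolding is_fib_rep_iff by blast
    also have "\<dots> \<le> fib (i + 1)" unfolding i_def by (rule fib_mono) simp
    finally show ?case
      unfolding fib_value_lang_word_Cons[OF i_def] by (rule lang_number.step[OF Cons.IH])
  qed
  ultimately show "lang_number n" by simp
qed

theorem theorem8:
  fixes n :: nat
  assumes "n > 0"
  shows "(\<forall>m. m > n \<longrightarrow> A105774 m > A105774 n) \<longleftrightarrow> fib_rep n \<in> lang"
proof -
  obtain w where w: "is_fib_rep w" "fib_value w = n" using fib_rep_exists assms by blast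
  have "(\<forall>m. m > n \<longrightarrow> A105774 m > A105774 n) \<longleftrightarrow> lang_number n"
    using later_larger_if_lang_number lang_number_if_later_larger assms
    unfolding later_larger_def by blast
  also have "\<dots> \<longleftrightarrow> (\<exists>ks m. fib_value (lang_word ks m) = n)"
    by (rule lang_number_iff_lang_word)
  also have "\<dots> \<longleftrightarrow> (\<exists>ks m. lang_word ks m = w)"
    using fib_rep_unique[OF is_fib_rep_lang_word w(1)] w(2) by auto
  also have "\<dots> \<longleftrightarrow> fib_rep n \<in> lang"
    unfolding fib_rep_eqI[OF w] lang_eq by auto
  finally show ?thesis .
qed

end
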